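(* Let $\rho_A,\rho_B,\rho_O,\rho_T>0$, $\boldsymbol\alpha\in\mathbb R^c$, $\boldsymbol v_1\in\mathbb R^d$. Let $\mathcal Z=\{\boldsymbol z_x\}_{x\in[c]}\in(\mathbb R^d)^c$ and define $\mathcal Z'=\{\boldsymbol z'_x\}_{x\in[c]}$ by $$\boldsymbol z'_x=\rho_A\boldsymbol z_x+\frac{\rho_B}{d_x}\sum_{y\in[c]}w_{x,y}\boldsymbol z_y+\rho_O\sum_{y\in[c]}\alpha_y\boldsymbol z_y+\rho_T\boldsymbol v_1.$$ Let $\boldsymbol Z\in\mathbb R^{d\times c}$ and $\boldsymbol Z'\in\mathbb R^{d\times c}$ be the matrices with columns $\boldsymbol z_x$ and $\boldsymbol z'_x$. Let $\boldsymbol M=\rho_A\boldsymbol I+\rho_B\boldsymbol D^{-1/2}\boldsymbol W\boldsymbol D^{-1/2}$ with eigenvalues $\lambda_1,\dots,\lambda_c$ arranged in non-increasing order of absolute value, and eigen-decomposition $$\boldsymbol M=\begin{bmatrix}\boldsymbol f&\boldsymbol X&\boldsymbol Y\end{bmatrix}\begin{bmatrix}\lambda_1&&\\&\boldsymbol\Lambda&\\&&\boldsymbol\Lambda'\end{bmatrix}\begin{bmatrix}\boldsymbol f^\top\\\boldsymbol X^\top\\\boldsymbol Y^\top\end{bmatrix},$$ with orthonormal eigenvectors, $\boldsymbol\Lambda=\mathrm{diag}(\lambda_2,\dots,\lambda_q)$, $\boldsymbol\Lambda'=\mathrm{diag}(\lambda_{q+1},\dots,\lambda_c)$ for some $2\le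 q<c$. Let $\delta_{\boldsymbol M}=|\lambda_q/\lambda_{q+1}|$. Then, provided $\lambda_{q+1}\neq0$, $\|\boldsymbol Z\boldsymbol D^{1/2}\boldsymbol X\|\neq0$ and $\|\boldsymbol Z\boldsymbol D^{1/2}\boldsymbol Y\|\ne0$, $$\frac{\|\boldsymbol Z'\boldsymbol D^{1/2}\boldsymbol X\|}{\|\boldsymbol Z\boldsymbol D^{1/2}\boldsymbol X\|}\ge\delta_{\boldsymbol M}\frac{\|\boldsymbol Z'\boldsymbol D^{1/2}\boldsymbol Y\|}{\|\boldsymbol Z\boldsymbol D^{1/2}\boldsymbol Y\|}.$$
   Context: $\mathcal G$ is a connected undirected graph on $[c]$ with (0/1) adjacency matrix $\widetilde{\boldsymbol W}$ and stationary distribution $\boldsymbol\pi$ of its random walk (all $\pi_x>0$). $\boldsymbol W=\{w_{x,y}\}$ with $w_{x,y}=\widetilde w_{x,y}\pi_x\pi_y$ is the reweighted adjacency matrix, $d_x=\sum_y w_{x,y}$, $\boldsymbol D=\mathrm{diag}(d_1,\dots,d_c)$. $\|\cdot\|$ denotes the Frobenius norm. *)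

theory Defs
  imports "HOL-Analysis.Analysis"
begin

text \<open>Vertices of the graph are the elements of a finite type 'c (so c = CARD('c));
  the embedding dimension is a finite type 'd.  Matrices are HOL-Analysis matrices:
  real^'n^'m is an m x n matrix.\<close>

definition adjacency_matrix :: "real^'c^'c \<Rightarrow> bool" where
  "adjacency_matrix Wt \<longleftrightarrow> (\<forall>x y. Wt$x$y \<in> {0,1}) \<and> (\<forall>x y. Wt$x$y = Wt$y$x)"

definition graph_connected :: "real^'c^'c \<Rightarrow> bool" where
  "graph_connected Wt \<longleftrightarrow> (\<forall>x y. (x, y) \<in> {(a, b). Wt$a$b = 1}\<^sup>*)"

definition gdeg :: "real^'c^'c \<Rightarrow> 'c \<Rightarrow> real" where
  "gdeg Wt x = (\<Sum>y\<in>UNIV. Wt$x$y)"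

definition walk_matrix :: "real^'c^'c \<Rightarrow> real^'c^'c" where
  "walk_matrix Wt = (\<chi> x y. Wt$x$y / gdeg Wt x)"

definition stationary_distribution :: "real^'c^'c \<Rightarrow> real^'c \<Rightarrow> bool" where
  "stationary_distribution Wt p \<longleftrightarrow>
     (\<forall>x. p$x \<ge> 0) \<and> (\<Sum>x\<in>UNIV. p$x) = 1 \<and>
     (\<forall>y. (\<Sum>x\<in>UNIV. p$x * walk_matrix Wt $x$y) = p$y)"

definition reweighted :: "real^'c^'c \<Rightarrow> real^'c \<Rightarrow> real^'c^'c" where
  "reweighted Wt p = (\<chi> x y. Wt$x$y * p$x * p$y)"

definition wdeg :: "real^'c^'c \<Rightarrow> 'c \<Rightarrow> real" where
  "wdeg W x = (\<Sum>y\<in>UNIV. W$x$y)"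

definition diag_mat :: "('c \<Rightarrow> real) \<Rightarrow> real^'c^'c" where
  "diag_mat f = (\<chi> x y. if x = y then f x else 0)"

definition Mmat :: "real \<Rightarrow> real \<Rightarrow> real^'c^'c \<Rightarrow> real^'c^'c" where
  "Mmat rA rB W = rA *\<^sub>R mat 1 +
     rB *\<^sub>R (diag_mat (\<lambda>x. 1 / sqrt (wdeg W x)) ** W ** diag_mat (\<lambda>x. 1 / sqrt (wdeg W x)))"

definition col_matrix :: "('c \<Rightarrow> real^'d) \<Rightarrow> real^'c^'d" where
  "col_matrix z = (\<chi> i x. z x $ i)"

definition update :: "real \<Rightarrow> real \<Rightarrow> real \<Rightarrow> real \<Rightarrow> real^'c \<Rightarrow> real^'d \<Rightarrow> real^'c^'c
     \<Rightarrow> ('c \<Rightarrow> real^'d) \<Rightarrow> ('c \<Rightarrow> real^'d)" where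
  "update rA rB rO rT alpha v1 W z = (\<lambda>x.
      rA *\<^sub>R z x + (rB / wdeg W x) *\<^sub>R (\<Sum>y\<in>UNIV. W$x$y *\<^sub>R z y)
      + rO *\<^sub>R (\<Sum>y\<in>UNIV. alpha$y *\<^sub>R z y) + rT *\<^sub>R v1)"

definition outer :: "real^'c \<Rightarrow> real^'c \<Rightarrow> real^'c^'c" where
  "outer a b = (\<chi> i j. a$i * b$j)"

text \<open>Frobenius norm of the matrix A [u_k]_{k in K}, i.e. of the product of A with the matrix
  whose columns are the vectors u_k (k in K, in increasing order):
  the squared Frobenius norm is the sum of squared Euclidean norms of the columns A u_k.\<close>
definition frob_cols :: "real^'c^'d \<Rightarrow> (nat \<Rightarrow> real^'c) \<Rightarrow> nat set \<Rightarrow> real" where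
  "frob_cols A u K = sqrt (\<Sum>k\<in>K. (norm (A *v u k))\<^sup>2)"

end

(* The vector s = D^(1/2) 1 satisfies D^(-1/2) W D^(-1/2) s = s, so it is an eigenvector of M
   for rA + rB; by a maximum principle for the random walk on the connected graph, every
   eigenvector of M whose eigenvalue has modulus at least rA + rB is a multiple of s.  Hence
   u_k is orthogonal to s for k >= 2: otherwise lam_k = rA + rB, so the dominant eigenvector
   u_1 would be a multiple of s, although u_1 is orthogonal to u_k.  As W is symmetric,
   Z' D^(1/2) = Z D^(1/2) M + b s^T with b = rO Z alpha + rT v1, so Z' D^(1/2) u_k equals
   lam_k Z D^(1/2) u_k for k >= 2: the columns 2..q are stretched by at least |lam_q| and the
   columns q+1..c by at most |lam_(q+1)|. *)

theory Submission
  imports Defs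
begin

lemma ex_max_finite_type:
  fixes f :: "'a::finite \<Rightarrow> 'b::linorder"
  obtains x where "\<And>y. f y \<le> f x"
proof -
  have "Max (range f) \<in> range f" by simp
  then obtain x where x: "Max (range f) = f x" by blast
  show ?thesis
  proof (rule that)
    show "f y \<le> f x" for y unfolding x[symmetric] by (rule Max_ge) simp_all
  qed
qed

lemma outer_mult_vec: "outer a b *v v = (b \<bullet> v) *\<^sub>R a"
  by (simp add: vec_eq_iff outer_def matrix_vector_mult_def inner_vec_def sum_distrib_left mult_ac)

lemma sum_matrix_mult_vec: "(\<Sum>k\<in>K. A k) *v v = (\<Sum>k\<in>K. A k *v v)"
  by (induction K rule: infinite_finite_induct) (simp_all add: matrix_vector_mult_add_rdistrib)

lemma spectral_sum_mult_vec:
  assumes "finite K" "k \<in> K"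
    and orth: "\<And>i j. i \<in> K \<Longrightarrow> j \<in> K \<Longrightarrow> u i \<bullet> u j = (if i = j then 1 else 0)"
  shows "(\<Sum>j\<in>K. lam j *\<^sub>R outer (u j) (u j)) *v u k = lam k *\<^sub>R u k"
proof -
  have "(\<Sum>j\<in>K. lam j *\<^sub>R outer (u j) (u j)) *v u k = (\<Sum>j\<in>K. (lam j * (u j \<bullet> u k)) *\<^sub>R u j)"
    by (simp add: sum_matrix_mult_vec outer_mult_vec flip: scaleR_matrix_vector_assoc)
  also have "\<dots> = (\<Sum>j\<in>K. if j = k then lam k *\<^sub>R u k else 0)"
    by (rule sum.cong) (simp_all add: orth \<open>k \<in> K\<close>)
  finally show ?thesis using assms(1,2) by simp
qed

lemma frob_cols_nonneg: "0 \<le> frob_cols A u K"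
  by (simp add: frob_cols_def sum_nonneg)

lemma frob_cols_eigen:
  assumes "\<And>k. k \<in> K \<Longrightarrow> B *v u k = lam k *\<^sub>R (A *v u k)"
  shows "frob_cols B u K = sqrt (\<Sum>k\<in>K. (lam k)\<^sup>2 * (norm (A *v u k))\<^sup>2)"
  unfolding frob_cols_def
  by (rule arg_cong[where f = sqrt], rule sum.cong) (simp_all add: assms power_mult_distrib)

lemma frob_cols_scaled_lower:
  assumes "\<And>k. k \<in> K \<Longrightarrow> B *v u k = lam k *\<^sub>R (A *v u k)"
    and "0 \<le> l" and "\<And>k. k \<in> K \<Longrightarrow> l \<le> \<bar>lam k\<bar>"
  shows "l * frob_cols A u K \<le> frob_cols B u K"
proof -
  have "(\<Sum>k\<in>K. l\<^sup>2 * (norm (A *v u k))\<^sup>2) \<le> (\<Sum>k\<in>K. (lam k)\<^sup>2 * (norm (A *v u k))\<^sup>2)"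
    using power_mono[OF assms(3) \<open>0 \<le> l\<close>, of _ 2] by (intro sum_mono mult_right_mono) simp_all
  then have "sqrt (l\<^sup>2 * (\<Sum>k\<in>K. (norm (A *v u k))\<^sup>2)) \<le> frob_cols B u K"
    by (simp add: frob_cols_eigen[OF assms(1)] sum_distrib_left)
  then show ?thesis
    using \<open>0 \<le> l\<close> by (simp add: frob_cols_def real_sqrt_mult)
qed

lemma frob_cols_scaled_upper:
  assumes "\<And>k. k \<in> K \<Longrightarrow> B *v u k = lam k *\<^sub>R (A *v u k)"
    and "0 \<le> m" and "\<And>k. k \<in> K \<Longrightarrow> \<bar>lam k\<bar> \<le> m"
  shows "frob_cols B u K \<le> m * frob_cols A u K"
proof -
  have "(\<Sum>k\<in>K. (lam k)\<^sup>2 * (norm (A *v u k))\<^sup>2) \<le> (\<Sum>k\<in>K. m\<^sup>2 * (norm (A *v u k))\<^sup>2)"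
    using power_mono[OF assms(3) abs_ge_zero, of _ 2] by (intro sum_mono mult_right_mono) simp_all
  then have "frob_cols B u K \<le> sqrt (m\<^sup>2 * (\<Sum>k\<in>K. (norm (A *v u k))\<^sup>2))"
    by (simp add: frob_cols_eigen[OF assms(1)] sum_distrib_left)
  then show ?thesis
    using \<open>0 \<le> m\<close> by (simp add: frob_cols_def real_sqrt_mult)
qed

lemma Mmat_nth:
  "Mmat rA rB W $ i $ j
     = rA * (if i = j then 1 else 0) + rB * W$i$j / (sqrt (wdeg W i) * sqrt (wdeg W j))"
  unfolding Mmat_def diag_mat_def
  by (simp add: matrix_matrix_mult_def mat_def if_distrib if_distribR sum.delta cong: if_cong)

lemma matrix_vector_mult_nth: "(A *v v) $ i = (\<Sum>j\<in>UNIV. A$i$j * v$j)"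
  by (simp add: matrix_vector_mult_def)

lemma diag_mat_mult_vec: "diag_mat f *v v = (\<chi> x. f x * v$x)"
  by (simp add: vec_eq_iff diag_mat_def matrix_vector_mult_def if_distrib if_distribR sum.delta
      cong: if_cong)

lemma Mmat_mult_vec_nth:
  "(Mmat rA rB W *v v) $ x
     = rA * v$x + rB * (\<Sum>y\<in>UNIV. W$x$y * v$y / sqrt (wdeg W y)) / sqrt (wdeg W x)"
  by (simp add: Mmat_def matrix_vector_mult_add_rdistrib diag_mat_mult_vec matrix_vector_mult_nth
      sum_distrib_left sum_divide_distrib mult.commute
      flip: scaleR_matrix_vector_assoc matrix_vector_mul_assoc)

lemma transpose_Mmat:
  assumes "\<And>x y. W$x$y = W$y$x"
  shows "transpose (Mmat rA rB W) = Mmat rA rB W"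
  by (simp add: vec_eq_iff transpose_def Mmat_nth assms mult.commute)

lemma col_matrix_diag_mult_vec_nth:
  "((col_matrix z ** diag_mat s) *v v) $ i = (\<Sum>x\<in>UNIV. z x $ i * s x * v $ x)"
  unfolding col_matrix_def diag_mat_def matrix_matrix_mult_def matrix_vector_mult_def
  by (simp add: if_distrib if_distribR sum.delta cong: if_cong)

locale weighted_graph =
  fixes W :: "real^'c::finite^'c"
  assumes nonneg: "0 \<le> W$x$y"
    and symmetric: "W$x$y = W$y$x"
    and wdeg_pos: "0 < wdeg W x"
    and connected: "(x, y) \<in> {(a, b). 0 < W$a$b}\<^sup>*"
begin

definition sqrt_deg :: "real^'c" where
  "sqrt_deg = (\<chi> x. sqrt (wdeg W x))"

lemma sqrt_deg_nth: "sqrt_deg $ x = sqrt (wdeg W x)"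
  by (simp add: sqrt_deg_def)

lemma sqrt_deg_pos: "0 < sqrt_deg $ x"
  using wdeg_pos by (simp add: sqrt_deg_nth)

lemma sqrt_deg_square: "sqrt_deg $ x * sqrt_deg $ x = wdeg W x"
  using wdeg_pos by (simp add: sqrt_deg_nth less_imp_le)

lemma Mmat_mult_sqrt_deg: "Mmat rA rB W *v sqrt_deg = (rA + rB) *\<^sub>R sqrt_deg"
proof (unfold vec_eq_iff, intro allI)
  fix x
  have "(\<Sum>y\<in>UNIV. W$x$y * sqrt_deg$y / sqrt_deg$y) = sqrt_deg$x * sqrt_deg$x"
    using sqrt_deg_pos by (simp add: sqrt_deg_square wdeg_def less_le)
  then show "(Mmat rA rB W *v sqrt_deg) $ x = ((rA + rB) *\<^sub>R sqrt_deg) $ x"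
    using sqrt_deg_pos[of x]
    by (simp add: Mmat_mult_vec_nth algebra_simps flip: sqrt_deg_nth)
qed

lemma walk_eigenvalue_abs_le_1:
  assumes h: "\<And>x. (\<Sum>y\<in>UNIV. W$x$y * h y) = t * wdeg W x * h x" and "h x0 \<noteq> 0"
  shows "\<bar>t\<bar> \<le> 1"
proof -
  obtain x where x: "\<And>y. \<bar>h y\<bar> \<le> \<bar>h x\<bar>"
    using ex_max_finite_type[of "\<lambda>y. \<bar>h y\<bar>"] by blast
  have "\<bar>t\<bar> * (wdeg W x * \<bar>h x\<bar>) = \<bar>\<Sum>y\<in>UNIV. W$x$y * h y\<bar>"
    using h wdeg_pos[of x] by (simp add: abs_mult)
  also have "\<dots> \<le> (\<Sum>y\<in>UNIV. W$x$y * \<bar>h x\<bar>)"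
    by (rule order_trans[OF sum_abs sum_mono]) (simp add: abs_mult nonneg mult_left_mono x)
  also have "\<dots> = 1 * (wdeg W x * \<bar>h x\<bar>)"
    by (simp add: wdeg_def sum_distrib_right)
  finally have "\<bar>t\<bar> * (wdeg W x * \<bar>h x\<bar>) \<le> 1 * (wdeg W x * \<bar>h x\<bar>)" .
  moreover have "0 < wdeg W x * \<bar>h x\<bar>"
    using wdeg_pos[of x] x[of x0] \<open>h x0 \<noteq> 0\<close> by simp
  ultimately show ?thesis
    by (rule mult_right_le_imp_le)
qed

lemma walk_harmonic_constant:
  assumes h: "\<And>x. (\<Sum>y\<in>UNIV. W$x$y * h y) = wdeg W x * h x"
  shows "h x = h y"
proof -
  obtain m where m: "\<And>y. h y \<le> h m"
    using ex_max_finite_type by blast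
  have step: "h b = h m" if "h a = h m" "0 < W$a$b" for a b
  proof -
    have "(\<Sum>y\<in>UNIV. W$a$y * (h a - h y)) = 0"
      using h[of a] by (simp add: wdeg_def right_diff_distrib sum_subtractf sum_distrib_right)
    moreover have "\<forall>y\<in>UNIV. 0 \<le> W$a$y * (h a - h y)"
      using nonneg m that(1) by simp
    ultimately have "W$a$b * (h a - h b) = 0"
      by (simp add: sum_nonneg_eq_0_iff)
    with that show ?thesis by simp
  qed
  have "h y = h m" for y
    using connected[of m y] by (induction rule: rtrancl_induct) (auto intro: step)
  then show ?thesis by metis
qed

lemma Mmat_dominant_eigenvector:
  assumes "0 < rA" "0 < rB" and eig: "Mmat rA rB W *v g = mu *\<^sub>R g" and dom: "rA + rB \<le> \<bar>mu\<bar>"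
  obtains c where "g = c *\<^sub>R sqrt_deg"
proof (cases "g = 0")
  case True
  then show ?thesis using that[of 0] by simp
next
  case False
  define h where "h x = g$x / sqrt_deg$x" for x
  have g_h: "g$x = sqrt_deg$x * h x" for x
    using sqrt_deg_pos[of x] by (simp add: h_def)
  have h_eq: "(\<Sum>y\<in>UNIV. W$x$y * h y) = ((mu - rA) / rB) * wdeg W x * h x" for x
  proof -
    have "rA * g$x + rB * (\<Sum>y\<in>UNIV. W$x$y * h y) / sqrt_deg$x = mu * g$x"
      using eig by (simp add: vec_eq_iff Mmat_mult_vec_nth h_def times_divide_eq_right
          flip: sqrt_deg_nth)
    then have "rA * (sqrt_deg$x * sqrt_deg$x) * h x + rB * (\<Sum>y\<in>UNIV. W$x$y * h y)
        = mu * (sqrt_deg$x * sqrt_deg$x) * h x"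
      using sqrt_deg_pos[of x] by (simp add: g_h field_simps)
    then show ?thesis
      using \<open>0 < rB\<close> by (simp add: sqrt_deg_square field_simps)
  qed
  obtain x0 where "h x0 \<noteq> 0"
    using False by (auto simp: vec_eq_iff g_h)
  from walk_eigenvalue_abs_le_1[OF h_eq this] have "\<bar>(mu - rA) / rB\<bar> \<le> 1" .
  then have "mu = rA + rB"
    using dom assms(1,2) by (auto simp: abs_le_iff field_simps split: abs_split)
  then have "h x = h x0" for x
    using h_eq assms(2) by (intro walk_harmonic_constant) simp
  then show ?thesis
    using that[of "h x0"] by (simp add: vec_eq_iff g_h mult.commute)
qed

lemma eigenvector_orthogonal_sqrt_deg:
  assumes "0 < rA" "0 < rB"
    and dom: "Mmat rA rB W *v g = mu *\<^sub>R g" "g \<noteq> 0"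
    and eig: "Mmat rA rB W *v v = nu *\<^sub>R v" "\<bar>nu\<bar> \<le> \<bar>mu\<bar>"
    and orth: "g \<bullet> v = 0"
  shows "sqrt_deg \<bullet> v = 0"
proof (rule ccontr)
  assume nz: "sqrt_deg \<bullet> v \<noteq> 0"
  have "nu * (sqrt_deg \<bullet> v) = sqrt_deg \<bullet> (Mmat rA rB W *v v)"
    using eig(1) by simp
  also have "\<dots> = (Mmat rA rB W *v sqrt_deg) \<bullet> v"
    by (metis dot_lmul_matrix transpose_Mmat symmetric transpose_matrix_vector)
  also have "\<dots> = (rA + rB) * (sqrt_deg \<bullet> v)"
    by (simp add: Mmat_mult_sqrt_deg)
  finally have "nu = rA + rB"
    using nz by simp
  then have "rA + rB \<le> \<bar>mu\<bar>"
    using eig(2) by simp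
  then obtain c where c: "g = c *\<^sub>R sqrt_deg"
    using Mmat_dominant_eigenvector[OF assms(1,2) dom(1)] by blast
  then have "c * (sqrt_deg \<bullet> v) = 0"
    using orth by simp
  then show False
    using nz dom(2) c by simp
qed

(* Where the symmetry of W enters: the neighbour sum in z'_x runs over the row of x, while
   Z D^(1/2) M sums over the column. *)
lemma update_mult_vec:
  "(col_matrix (update rA rB rO rT alpha v1 W z) ** diag_mat (\<lambda>x. sqrt (wdeg W x))) *v v
   = (col_matrix z ** diag_mat (\<lambda>x. sqrt (wdeg W x))) *v (Mmat rA rB W *v v)
     + (sqrt_deg \<bullet> v) *\<^sub>R (rO *\<^sub>R (\<Sum>y\<in>UNIV. alpha$y *\<^sub>R z y) + rT *\<^sub>R v1)"
proof -
  have sqrt_wdeg: "(\<lambda>x. sqrt (wdeg W x)) = (\<lambda>x. sqrt_deg$x)"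
    by (simp add: sqrt_deg_nth)
  define b where "b = rO *\<^sub>R (\<Sum>y\<in>UNIV. alpha$y *\<^sub>R z y) + rT *\<^sub>R v1"
  let ?lhs = "(col_matrix (update rA rB rO rT alpha v1 W z) ** diag_mat (\<lambda>x. sqrt_deg$x)) *v v"
  let ?rhs = "(col_matrix z ** diag_mat (\<lambda>x. sqrt_deg$x)) *v (Mmat rA rB W *v v)"
  have "?lhs $ i = (?rhs + (sqrt_deg \<bullet> v) *\<^sub>R b) $ i" for i
  proof -
    let ?s = "\<lambda>x. sqrt_deg$x"
    let ?Wz = "\<lambda>x. \<Sum>y\<in>UNIV. W$x$y * z y $ i"
    let ?Wv = "\<lambda>x. \<Sum>y\<in>UNIV. W$x$y * v$y / ?s y"
    have upd: "update rA rB rO rT alpha v1 W z x $ i * ?s x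
        = rA * (z x $ i * ?s x) + rB * ?Wz x / ?s x + b $ i * ?s x" for x
      using sqrt_deg_pos[of x]
      by (simp add: update_def b_def algebra_simps flip: sqrt_deg_square)
    have Mv: "z x $ i * ?s x * (Mmat rA rB W *v v) $ x
        = rA * (z x $ i * ?s x * v$x) + rB * (z x $ i * ?Wv x)" for x
      using sqrt_deg_pos[of x] by (simp add: Mmat_mult_vec_nth algebra_simps flip: sqrt_deg_nth)
    have swap: "(\<Sum>x\<in>UNIV. ?Wz x / ?s x * v$x) = (\<Sum>x\<in>UNIV. z x $ i * ?Wv x)"
      by (simp add: sum_divide_distrib sum_distrib_left sum_distrib_right mult_ac)
        (subst sum.swap, simp add: symmetric mult_ac)
    have "?lhs $ i = (\<Sum>x\<in>UNIV. update rA rB rO rT alpha v1 W z x $ i * ?s x * v$x)"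
      by (rule col_matrix_diag_mult_vec_nth)
    also have "\<dots> = (\<Sum>x\<in>UNIV. (rA * (z x $ i * ?s x) + rB * ?Wz x / ?s x + b $ i * ?s x) * v$x)"
      by (simp only: upd)
    also have "\<dots> = rA * (\<Sum>x\<in>UNIV. z x $ i * ?s x * v$x) + rB * (\<Sum>x\<in>UNIV. ?Wz x / ?s x * v$x)
        + b $ i * (sqrt_deg \<bullet> v)"
      by (simp add: inner_vec_def algebra_simps sum.distrib sum_distrib_left sum_distrib_right
          sum_divide_distrib)
    also have "\<dots> = (?rhs + (sqrt_deg \<bullet> v) *\<^sub>R b) $ i"
      by (simp only: swap) (simp add: col_matrix_diag_mult_vec_nth Mv sum.distrib sum_distrib_left)
    finally show ?thesis .
  qed
  then show ?thesis
    unfolding sqrt_wdeg b_def vec_eq_iff by blast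
qed

end

lemma weighted_graph_reweighted:
  fixes Wt :: "real^'c::finite^'c"
  assumes adj: "adjacency_matrix Wt" and conn: "graph_connected Wt"
    and ppos: "\<And>x. 0 < p$x" and two: "2 \<le> CARD('c)"
  shows "weighted_graph (reweighted Wt p)"
proof -
  let ?W = "reweighted Wt p"
  have nonneg: "0 \<le> ?W$x$y" for x y
  proof -
    have "Wt$x$y \<in> {0, 1}"
      using adj by (simp add: adjacency_matrix_def)
    then show ?thesis
      using ppos[of x] ppos[of y] by (auto simp: reweighted_def)
  qed
  have "{(a, b). Wt$a$b = 1} \<subseteq> {(a, b). 0 < ?W$a$b}"
    using ppos by (auto simp: reweighted_def)
  then have conn': "(x, y) \<in> {(a, b). 0 < ?W$a$b}\<^sup>*" for x y
    using conn rtrancl_mono unfolding graph_connected_def by blast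
  have "0 < wdeg ?W x" for x
  proof -
    have "\<not> CARD('c) \<le> Suc 0"
      using two by simp
    then obtain y :: 'c where "y \<noteq> x"
      by (metis card_le_Suc0_iff_eq finite UNIV_I)
    with conn'[of x y] obtain a where "0 < ?W$x$a"
      by (cases rule: converse_rtranclE) auto
    also have "\<dots> \<le> wdeg ?W x"
      unfolding wdeg_def by (rule member_le_sum) (simp_all add: nonneg)
    finally show ?thesis .
  qed
  moreover have "?W$x$y = ?W$y$x" for x y
    using adj by (simp add: adjacency_matrix_def reweighted_def mult_ac)
  ultimately show ?thesis
    using nonneg conn' by unfold_locales
qed

lemma scaled_ratio_le:
  fixes a b a' b' l m :: real
  assumes "l * a \<le> a'" "b' \<le> m * b" "0 < a" "0 < b" "0 < m" "0 \<le> l"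
  shows "l / m * (b' / b) \<le> a' / a"
proof -
  have "l / m * (b' / b) \<le> l / m * m"
    using assms by (intro mult_left_mono) (simp_all add: divide_le_eq)
  also have "\<dots> \<le> a' / a"
    using assms by (simp add: le_divide_eq)
  finally show ?thesis .
qed

theorem corollary3:
  fixes Wt :: "real^'c::finite^'c" and p :: "real^'c"
    and rA rB rO rT :: real and alpha :: "real^'c" and v1 :: "real^'d::finite"
    and z :: "'c \<Rightarrow> real^'d"
    and lam :: "nat \<Rightarrow> real" and u :: "nat \<Rightarrow> real^'c" and q :: nat
  assumes adj: "adjacency_matrix Wt"
    and conn: "graph_connected Wt"
    and stat: "stationary_distribution Wt p"
    and ppos: "\<forall>x. p$x > 0"
    and rho: "rA > 0" "rB > 0" "rO > 0" "rT > 0"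
    and orth: "\<forall>i\<in>{1..CARD('c)}. \<forall>j\<in>{1..CARD('c)}. u i \<bullet> u j = (if i = j then 1 else 0)"
    and decomp: "Mmat rA rB (reweighted Wt p) = (\<Sum>k\<in>{1..CARD('c)}. lam k *\<^sub>R outer (u k) (u k))"
    and order: "\<forall>i j. 1 \<le> i \<and> i \<le> j \<and> j \<le> CARD('c) \<longrightarrow> \<bar>lam j\<bar> \<le> \<bar>lam i\<bar>"
    and q: "2 \<le> q" "q < CARD('c)"
    and lamq: "lam (q + 1) \<noteq> 0"
    and nzX: "frob_cols (col_matrix z ** diag_mat (\<lambda>x. sqrt (wdeg (reweighted Wt p) x))) u {2..q} \<noteq> 0"
    and nzY: "frob_cols (col_matrix z ** diag_mat (\<lambda>x. sqrt (wdeg (reweighted Wt p) x))) u {q+1..CARD('c)} \<noteq> 0"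
  shows
    "frob_cols (col_matrix (update rA rB rO rT alpha v1 (reweighted Wt p) z)
          ** diag_mat (\<lambda>x. sqrt (wdeg (reweighted Wt p) x))) u {2..q}
       / frob_cols (col_matrix z ** diag_mat (\<lambda>x. sqrt (wdeg (reweighted Wt p) x))) u {2..q}
     \<ge> \<bar>lam q / lam (q + 1)\<bar> *
       (frob_cols (col_matrix (update rA rB rO rT alpha v1 (reweighted Wt p) z)
          ** diag_mat (\<lambda>x. sqrt (wdeg (reweighted Wt p) x))) u {q+1..CARD('c)}
       / frob_cols (col_matrix z ** diag_mat (\<lambda>x. sqrt (wdeg (reweighted Wt p) x))) u {q+1..CARD('c)})"
proof -
  define W where "W = reweighted Wt p"
  define A where "A = col_matrix z ** diag_mat (\<lambda>x. sqrt (wdeg W x))"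
  define A' where
    "A' = col_matrix (update rA rB rO rT alpha v1 W z) ** diag_mat (\<lambda>x. sqrt (wdeg W x))"
  define n where "n = CARD('c)"
  interpret weighted_graph W
    unfolding W_def using adj conn ppos q by (intro weighted_graph_reweighted) simp_all
  have eig: "Mmat rA rB W *v u k = lam k *\<^sub>R u k" if "k \<in> {1..n}" for k
    using spectral_sum_mult_vec[of "{1..n}" k u lam] orth decomp that by (simp add: W_def n_def)
  have "1 \<in> {1..n}"
    using q by (simp add: n_def)
  then have "u 1 \<bullet> u 1 = 1"
    using orth unfolding n_def by fastforce
  then have "u 1 \<noteq> 0"
    by auto
  have A'_eig: "A' *v u k = lam k *\<^sub>R (A *v u k)" if "k \<in> {2..n}" for k
  proof -
    have "sqrt_deg \<bullet> u k = 0"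
      using that orth order
      by (intro eigenvector_orthogonal_sqrt_deg[OF rho(1,2) eig \<open>u 1 \<noteq> 0\<close> eig])
        (auto simp: n_def)
    then show ?thesis
      using eig that by (simp add: A_def A'_def update_mult_vec matrix_vector_mult_scaleR)
  qed
  have X: "\<bar>lam q\<bar> * frob_cols A u {2..q} \<le> frob_cols A' u {2..q}"
    using A'_eig order q by (intro frob_cols_scaled_lower) (auto simp: n_def)
  have Y: "frob_cols A' u {q+1..n} \<le> \<bar>lam (q+1)\<bar> * frob_cols A u {q+1..n}"
    using A'_eig order q by (intro frob_cols_scaled_upper) (auto simp: n_def)
  have "0 < frob_cols A u {2..q}" "0 < frob_cols A u {q+1..n}"
    using nzX nzY frob_cols_nonneg by (simp_all add: A_def W_def n_def less_le)
  then show ?thesis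
    using scaled_ratio_le[OF X Y] lamq by (simp add: A_def A'_def W_def n_def abs_divide)
qed

end
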